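(* Let $\mathfrak g$ be a finite-dimensional simple Lie algebra over $\mathbb R$ or $\mathbb C$, and let $\mathfrak g=\mathfrak g_{\bar 0}\oplus\mathfrak g_{\bar 1}$ be a nontrivial $\mathbb Z_2$-grading (i.e. $[\mathfrak g_{\bar i},\mathfrak g_{\bar j}]\subseteq\mathfrak g_{\overline{i+j}}$ and $\mathfrak g_{\bar 1}\neq 0$). Then $\mathfrak g_{\bar 1}$ is a maximal Lie triple subsystem of $\mathfrak g$.
   Context: A Lie algebra $\mathfrak g$ is regarded as a Lie triple system with triple product $[x,y,z]:=[[x,y],z]$. A Lie triple subsystem of $\mathfrak g$ is a vector subspace $T$ with $[[T,T],T]\subseteq T$. A maximal Lie triple subsystem is a proper Lie triple subsystem not properly contained in any other proper Lie triple subsystem. *)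

theory Defs
  imports Complex_Main
begin

definition lie_algebra :: "('k::field \<Rightarrow> 'v::ab_group_add \<Rightarrow> 'v) \<Rightarrow> ('v \<Rightarrow> 'v \<Rightarrow> 'v) \<Rightarrow> bool" where
  "lie_algebra s br \<longleftrightarrow> vector_space s
     \<and> (\<forall>x y z. br (x + y) z = br x z + br y z)
     \<and> (\<forall>x y z. br x (y + z) = br x y + br x z)
     \<and> (\<forall>a x y. br (s a x) y = s a (br x y))
     \<and> (\<forall>a x y. br x (s a y) = s a (br x y))
     \<and> (\<forall>x. br x x = 0)
     \<and> (\<forall>x y z. br x (br y z) + br y (br z x) + br z (br x y) = 0)"

definition finite_dim :: "('k::field \<Rightarrow> 'v::ab_group_add \<Rightarrow> 'v) \<Rightarrow> bool" where
  "finite_dim s \<longleftrightarrow> (\<exists>B. finite B \<and> module.span s B = UNIV)"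

definition lie_ideal :: "('k::field \<Rightarrow> 'v::ab_group_add \<Rightarrow> 'v) \<Rightarrow> ('v \<Rightarrow> 'v \<Rightarrow> 'v) \<Rightarrow> 'v set \<Rightarrow> bool" where
  "lie_ideal s br I \<longleftrightarrow> module.subspace s I \<and> (\<forall>x y. y \<in> I \<longrightarrow> br x y \<in> I)"

definition simple_lie_algebra :: "('k::field \<Rightarrow> 'v::ab_group_add \<Rightarrow> 'v) \<Rightarrow> ('v \<Rightarrow> 'v \<Rightarrow> 'v) \<Rightarrow> bool" where
  "simple_lie_algebra s br \<longleftrightarrow> lie_algebra s br \<and> (\<exists>x y. br x y \<noteq> 0)
     \<and> (\<forall>I. lie_ideal s br I \<longrightarrow> I = {0} \<or> I = UNIV)"

definition Z2_grading :: "('k::field \<Rightarrow> 'v::ab_group_add \<Rightarrow> 'v) \<Rightarrow> ('v \<Rightarrow> 'v \<Rightarrow> 'v) \<Rightarrow> 'v set \<Rightarrow> 'v set \<Rightarrow> bool" where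
  "Z2_grading s br g0 g1 \<longleftrightarrow> module.subspace s g0 \<and> module.subspace s g1
     \<and> g0 \<inter> g1 = {0} \<and> (\<forall>v. \<exists>a\<in>g0. \<exists>b\<in>g1. v = a + b)
     \<and> (\<forall>x\<in>g0. \<forall>y\<in>g0. br x y \<in> g0)
     \<and> (\<forall>x\<in>g0. \<forall>y\<in>g1. br x y \<in> g1)
     \<and> (\<forall>x\<in>g1. \<forall>y\<in>g0. br x y \<in> g1)
     \<and> (\<forall>x\<in>g1. \<forall>y\<in>g1. br x y \<in> g0)"

definition lie_triple_subsystem :: "('k::field \<Rightarrow> 'v::ab_group_add \<Rightarrow> 'v) \<Rightarrow> ('v \<Rightarrow> 'v \<Rightarrow> 'v) \<Rightarrow> 'v set \<Rightarrow> bool" where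
  "lie_triple_subsystem s br T \<longleftrightarrow> module.subspace s T
     \<and> (\<forall>x\<in>T. \<forall>y\<in>T. \<forall>z\<in>T. br (br x y) z \<in> T)"

definition maximal_lie_triple_subsystem :: "('k::field \<Rightarrow> 'v::ab_group_add \<Rightarrow> 'v) \<Rightarrow> ('v \<Rightarrow> 'v \<Rightarrow> 'v) \<Rightarrow> 'v set \<Rightarrow> bool" where
  "maximal_lie_triple_subsystem s br T \<longleftrightarrow> lie_triple_subsystem s br T \<and> T \<noteq> UNIV
     \<and> (\<forall>T'. lie_triple_subsystem s br T' \<and> T' \<noteq> UNIV \<and> T \<subseteq> T' \<longrightarrow> T' = T)"

end

theory Submission
  imports Defs
begin

text \<open>The odd part generates the even part: \<open>span [g1,g1] + g1\<close> is a nonzero ideal, so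
\<open>g0 = span [g1,g1]\<close>. Now let \<open>T \<supseteq> g1\<close> be a proper Lie triple subsystem and \<open>A = T \<inter> g0\<close>.
Since \<open>[[g1,g1],A] \<subseteq> T \<inter> g0\<close>, the even part \<open>g0\<close> stabilises \<open>A\<close>, and \<open>A + span [A,g1]\<close>
is a graded ideal. It cannot be everything, for then \<open>g0 \<subseteq> T\<close> and \<open>T\<close> would not be
proper; by simplicity it is zero, so \<open>A = 0\<close> and \<open>T = g1\<close>. No finiteness of the
dimension and no property of the ground field is needed.\<close>

locale lie_alg = vector_space scale
  for scale :: "'k::field \<Rightarrow> 'v::ab_group_add \<Rightarrow> 'v" (infixr \<open>*s\<close> 75) +
  fixes br :: "'v \<Rightarrow> 'v \<Rightarrow> 'v"
  assumes bracket_add_left: "br (x + y) z = br x z + br y z"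
    and bracket_add_right: "br x (y + z) = br x y + br x z"
    and bracket_scale_left: "br (a *s x) y = a *s br x y"
    and bracket_scale_right: "br x (a *s y) = a *s br x y"
    and bracket_self: "br x x = 0"
    and jacobi: "br x (br y z) + br y (br z x) + br z (br x y) = 0"
begin

lemma bracket_zero_left [simp]: "br 0 y = 0"
  using bracket_add_left[of 0 0 y] by simp

lemma bracket_zero_right [simp]: "br y 0 = 0"
  using bracket_add_right[of y 0 0] by simp

lemma bracket_antisym: "br x y = - br y x"
  using bracket_self[of "x + y"] bracket_self[of x] bracket_self[of y]
  by (simp add: bracket_add_left bracket_add_right eq_neg_iff_add_eq_0 add.commute)

lemma bracket_neg_right: "br y (- x) = - br y x"
  using bracket_add_right[of y x "- x"] by (simp add: eq_neg_iff_add_eq_0 add.commute)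

lemma bracket_derivation: "br a (br x y) = br (br a x) y + br x (br a y)"
  using jacobi[of a x y] bracket_antisym[of y "br a x"] bracket_antisym[of y a]
  by (simp add: bracket_neg_right algebra_simps eq_neg_iff_add_eq_0)

lemma bracket_span_right:
  assumes "subspace W" "\<And>u. u \<in> S \<Longrightarrow> br a u \<in> W" "v \<in> span S"
  shows "br a v \<in> W"
proof -
  have "subspace {v. br a v \<in> W}"
    using assms(1) unfolding subspace_def by (auto simp: bracket_add_right bracket_scale_right)
  then have "span S \<subseteq> {v. br a v \<in> W}"
    using assms(2) by (intro span_minimal) auto
  then show ?thesis using assms(3) by blast
qed

lemma bracket_span_left:
  assumes "subspace W" "\<And>u. u \<in> S \<Longrightarrow> br u a \<in> W" "v \<in> span S"
  shows "br v a \<in> W"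
proof -
  have "subspace {v. br v a \<in> W}"
    using assms(1) unfolding subspace_def by (auto simp: bracket_add_left bracket_scale_left)
  then have "span S \<subseteq> {v. br v a \<in> W}"
    using assms(2) by (intro span_minimal) auto
  then show ?thesis using assms(3) by blast
qed

end

lemma lie_alg_if_lie_algebra: "lie_algebra s br \<Longrightarrow> lie_alg s br"
  unfolding lie_algebra_def lie_alg_def lie_alg_axioms_def by auto

locale z2_graded_lie_alg = lie_alg scale br
  for scale :: "'k::field \<Rightarrow> 'v::ab_group_add \<Rightarrow> 'v" (infixr \<open>*s\<close> 75) and br +
  fixes g0 g1 :: "'v set"
  assumes subspace_g0: "subspace g0" and subspace_g1: "subspace g1"
    and g0_inter_g1: "g0 \<inter> g1 = {0}"
    and g0_plus_g1: "\<exists>a\<in>g0. \<exists>b\<in>g1. v = a + b"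
    and bracket_g0_g0: "x \<in> g0 \<Longrightarrow> y \<in> g0 \<Longrightarrow> br x y \<in> g0"
    and bracket_g0_g1: "x \<in> g0 \<Longrightarrow> y \<in> g1 \<Longrightarrow> br x y \<in> g1"
    and bracket_g1_g0: "x \<in> g1 \<Longrightarrow> y \<in> g0 \<Longrightarrow> br x y \<in> g1"
    and bracket_g1_g1: "x \<in> g1 \<Longrightarrow> y \<in> g1 \<Longrightarrow> br x y \<in> g0"
begin

lemma lie_ideal_graded_sum:
  assumes "subspace A" "subspace B"
    and "\<And>c a. c \<in> g0 \<Longrightarrow> a \<in> A \<Longrightarrow> br c a \<in> A"
    and "\<And>d a. d \<in> g1 \<Longrightarrow> a \<in> A \<Longrightarrow> br d a \<in> B"
    and "\<And>c b. c \<in> g0 \<Longrightarrow> b \<in> B \<Longrightarrow> br c b \<in> B"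
    and "\<And>d b. d \<in> g1 \<Longrightarrow> b \<in> B \<Longrightarrow> br d b \<in> A"
  shows "lie_ideal scale br {a + b |a b. a \<in> A \<and> b \<in> B}"
proof -
  let ?I = "{a + b |a b. a \<in> A \<and> b \<in> B}"
  have "br v w \<in> ?I" if "w \<in> ?I" for v w
  proof -
    obtain a b where w: "w = a + b" "a \<in> A" "b \<in> B" using \<open>w \<in> ?I\<close> by blast
    obtain c d where v: "v = c + d" "c \<in> g0" "d \<in> g1" using g0_plus_g1 by blast
    have "br v w = (br c a + br d b) + (br d a + br c b)"
      by (simp add: v w bracket_add_left bracket_add_right algebra_simps)
    moreover have "br c a + br d b \<in> A" "br d a + br c b \<in> B"
      using assms v w by (auto intro: subspace_add)
    ultimately show ?thesis by blast
  qed
  then show ?thesis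
    unfolding lie_ideal_def using subspace_sums[OF assms(1,2)] by blast
qed

lemma g0_subset_if_graded_sum_UNIV:
  assumes "A \<subseteq> g0" "B \<subseteq> g1" "{a + b |a b. a \<in> A \<and> b \<in> B} = UNIV"
  shows "g0 \<subseteq> A"
proof
  fix c assume "c \<in> g0"
  obtain a b where ab: "c = a + b" "a \<in> A" "b \<in> B" using assms(3) by blast
  have "b = c - a" using ab by simp
  moreover have "c - a \<in> g0"
    using subspace_diff[OF subspace_g0 \<open>c \<in> g0\<close>] ab(2) assms(1) by blast
  ultimately have "b \<in> g0" by simp
  then have "b = 0" using ab assms(2) g0_inter_g1 by auto
  then show "c \<in> A" using ab by simp
qed

lemma subset_g1_if_inter_g0_trivial:
  assumes "subspace T" "g1 \<subseteq> T" "T \<inter> g0 \<subseteq> {0}"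
  shows "T \<subseteq> g1"
proof
  fix t assume "t \<in> T"
  obtain a b where ab: "t = a + b" "a \<in> g0" "b \<in> g1" using g0_plus_g1 by blast
  have "a = t - b" using ab by simp
  moreover have "t - b \<in> T"
    using subspace_diff[OF assms(1) \<open>t \<in> T\<close>] ab(3) assms(2) by blast
  ultimately have "a \<in> T" by simp
  then show "t \<in> g1" using ab assms(3) by auto
qed

lemma UNIV_if_contains_g0_g1:
  assumes "subspace T" "g0 \<subseteq> T" "g1 \<subseteq> T"
  shows "T = UNIV"
proof -
  have "v \<in> T" for v
  proof -
    obtain a b where "v = a + b" "a \<in> g0" "b \<in> g1" using g0_plus_g1 by blast
    then show ?thesis using subspace_add[OF assms(1)] assms(2,3) by blast
  qed
  then show ?thesis by blast
qed

lemma lie_triple_subsystem_g1: "lie_triple_subsystem scale br g1"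
  unfolding lie_triple_subsystem_def
  using subspace_g1 bracket_g1_g1 bracket_g0_g1 by auto

end

locale simple_z2_graded_lie_alg = z2_graded_lie_alg +
  assumes simple: "lie_ideal scale br I \<Longrightarrow> I = {0} \<or> I = UNIV"
    and non_abelian: "\<exists>x y. br x y \<noteq> 0"
    and g1_nonzero: "g1 \<noteq> {0}"
begin

lemma g0_eq_span_bracket_g1: "g0 = span {br x y |x y. x \<in> g1 \<and> y \<in> g1}"
proof
  let ?S = "span {br x y |x y. x \<in> g1 \<and> y \<in> g1}"
  have generator: "br x y \<in> ?S" if "x \<in> g1" "y \<in> g1" for x y
    using that by (auto intro: span_base)
  have even_stable: "br c v \<in> ?S" if "c \<in> g0" "v \<in> ?S" for c v
  proof (rule bracket_span_right[OF subspace_span _ \<open>v \<in> ?S\<close>])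
    fix u assume "u \<in> {br x y |x y. x \<in> g1 \<and> y \<in> g1}"
    then obtain x y where "u = br x y" "x \<in> g1" "y \<in> g1" by blast
    moreover have "br c (br x y) \<in> ?S"
      unfolding bracket_derivation[of c x y] using \<open>c \<in> g0\<close> \<open>x \<in> g1\<close> \<open>y \<in> g1\<close>
      by (intro span_add generator bracket_g0_g1)
    ultimately show "br c u \<in> ?S" by simp
  qed
  show "?S \<subseteq> g0"
    using bracket_g1_g1 subspace_g0 by (intro span_minimal) auto
  then have "lie_ideal scale br {a + b |a b. a \<in> ?S \<and> b \<in> g1}"
    using even_stable generator bracket_g0_g1 bracket_g1_g0 subspace_g1
    by (intro lie_ideal_graded_sum) auto
  moreover have "{a + b |a b. a \<in> ?S \<and> b \<in> g1} \<noteq> {0}"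
  proof -
    obtain b where "b \<in> g1" "b \<noteq> 0" using g1_nonzero subspace_0[OF subspace_g1] by blast
    then have "0 + b \<in> {a + b |a b. a \<in> ?S \<and> b \<in> g1}" using span_zero by blast
    then show ?thesis using \<open>b \<noteq> 0\<close> by auto
  qed
  ultimately have "{a + b |a b. a \<in> ?S \<and> b \<in> g1} = UNIV"
    using simple by blast
  then show "g0 \<subseteq> ?S"
    using \<open>?S \<subseteq> g0\<close> by (intro g0_subset_if_graded_sum_UNIV) auto
qed

lemma g1_ne_UNIV: "g1 \<noteq> UNIV"
proof
  assume "g1 = UNIV"
  then have "g0 = {0}" using g0_inter_g1 subspace_g0 subspace_0 by blast
  then show False using non_abelian bracket_g1_g1 \<open>g1 = UNIV\<close> by blast
qed

lemma bracket_g0_triple_subsystem_inter_g0: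
  assumes "lie_triple_subsystem scale br T" "g1 \<subseteq> T" "c \<in> g0" "a \<in> T \<inter> g0"
  shows "br c a \<in> T \<inter> g0"
proof (rule bracket_span_left[where S = "{br x y |x y. x \<in> g1 \<and> y \<in> g1}"])
  show "subspace (T \<inter> g0)"
    using assms(1) subspace_g0 unfolding lie_triple_subsystem_def by (blast intro: subspace_inter)
  show "c \<in> span {br x y |x y. x \<in> g1 \<and> y \<in> g1}"
    using assms(3) g0_eq_span_bracket_g1 by blast
  fix u assume "u \<in> {br x y |x y. x \<in> g1 \<and> y \<in> g1}"
  then obtain x y where u: "u = br x y" "x \<in> g1" "y \<in> g1" by blast
  have "br (br x y) a \<in> T"
    using assms(1,2,4) u unfolding lie_triple_subsystem_def by blast
  moreover have "br (br x y) a \<in> g0"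
    using assms(4) u by (intro bracket_g0_g0 bracket_g1_g1) auto
  ultimately show "br u a \<in> T \<inter> g0" using u(1) by blast
qed

lemma lie_ideal_from_triple_subsystem:
  assumes "lie_triple_subsystem scale br T" "g1 \<subseteq> T"
  defines "A \<equiv> T \<inter> g0"
  shows "lie_ideal scale br {a + b |a b. a \<in> A \<and> b \<in> span {br a x |a x. a \<in> A \<and> x \<in> g1}}"
proof -
  let ?B = "span {br a x |a x. a \<in> A \<and> x \<in> g1}"
  have subspace_A: "subspace A"
    using assms(1) subspace_g0 unfolding A_def lie_triple_subsystem_def
    by (blast intro: subspace_inter)
  have triple: "br (br x y) z \<in> T" if "x \<in> T" "y \<in> T" "z \<in> T" for x y z
    using assms(1) that unfolding lie_triple_subsystem_def by blast
  have generator: "br a x \<in> ?B" if "a \<in> A" "x \<in> g1" for a x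
    using that by (auto intro: span_base)
  have g0_A: "br c a \<in> A" if "c \<in> g0" "a \<in> A" for c a
    using bracket_g0_triple_subsystem_inter_g0 assms(1,2) that unfolding A_def by blast
  have g1_A: "br d a \<in> ?B" if "d \<in> g1" "a \<in> A" for d a
    unfolding bracket_antisym[of d a] using that by (intro span_neg generator)
  have g0_B: "br c b \<in> ?B" if "c \<in> g0" "b \<in> ?B" for c b
  proof (rule bracket_span_right[OF subspace_span _ \<open>b \<in> ?B\<close>])
    fix u assume "u \<in> {br a x |a x. a \<in> A \<and> x \<in> g1}"
    then obtain a x where "u = br a x" "a \<in> A" "x \<in> g1" by blast
    moreover have "br c (br a x) \<in> ?B"
      unfolding bracket_derivation[of c a x] using \<open>c \<in> g0\<close> \<open>a \<in> A\<close> \<open>x \<in> g1\<close>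
      by (intro span_add generator g0_A bracket_g0_g1)
    ultimately show "br c u \<in> ?B" by simp
  qed
  have g1_B: "br d b \<in> A" if "d \<in> g1" "b \<in> ?B" for d b
  proof (rule bracket_span_right[OF subspace_A _ \<open>b \<in> ?B\<close>])
    fix u assume "u \<in> {br a x |a x. a \<in> A \<and> x \<in> g1}"
    then obtain a x where u: "u = br a x" "a \<in> A" "x \<in> g1" by blast
    have "br (br a x) d \<in> T"
      using u \<open>d \<in> g1\<close> assms(2) unfolding A_def by (intro triple) auto
    moreover have "br (br a x) d \<in> g0"
      using u \<open>d \<in> g1\<close> unfolding A_def by (intro bracket_g1_g1 bracket_g0_g1) auto
    ultimately have "br u d \<in> A" unfolding A_def u(1) by blast
    then show "br d u \<in> A"
      unfolding bracket_antisym[of d u] by (rule subspace_neg[OF subspace_A])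
  qed
  show ?thesis
    using subspace_A g0_A g1_A g0_B g1_B by (intro lie_ideal_graded_sum) auto
qed

lemma triple_subsystem_containing_g1:
  assumes "lie_triple_subsystem scale br T" "T \<noteq> UNIV" "g1 \<subseteq> T"
  shows "T = g1"
proof -
  define A where "A = T \<inter> g0"
  let ?B = "span {br a x |a x. a \<in> A \<and> x \<in> g1}"
  let ?I = "{a + b |a b. a \<in> A \<and> b \<in> ?B}"
  have subspace_T: "subspace T" using assms(1) unfolding lie_triple_subsystem_def by blast
  have "?B \<subseteq> g1"
    using bracket_g0_g1 subspace_g1 unfolding A_def by (intro span_minimal) auto
  have "?I \<noteq> UNIV"
  proof
    assume "?I = UNIV"
    then have "g0 \<subseteq> T"
      using g0_subset_if_graded_sum_UNIV[of A ?B] \<open>?B \<subseteq> g1\<close> unfolding A_def by blast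
    then show False using UNIV_if_contains_g0_g1 subspace_T assms(2,3) by blast
  qed
  then have "?I = {0}"
    using simple lie_ideal_from_triple_subsystem[OF assms(1,3)] unfolding A_def by blast
  moreover have "A \<subseteq> ?I"
  proof
    fix a assume "a \<in> A"
    then have "a + 0 \<in> ?I" using span_zero by blast
    then show "a \<in> ?I" by simp
  qed
  ultimately have "T \<inter> g0 \<subseteq> {0}" unfolding A_def by blast
  then show ?thesis
    using subset_g1_if_inter_g0_trivial subspace_T assms(3) by blast
qed

theorem maximal_lie_triple_subsystem_g1: "maximal_lie_triple_subsystem scale br g1"
  unfolding maximal_lie_triple_subsystem_def
  using lie_triple_subsystem_g1 g1_ne_UNIV triple_subsystem_containing_g1 by blast

end

lemma maximal_lie_triple_subsystem_odd_part:
  assumes "simple_lie_algebra s br" "Z2_grading s br g0 g1" "g1 \<noteq> {0}"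
  shows "maximal_lie_triple_subsystem s br g1"
proof -
  interpret lie_alg s br
    using assms(1) unfolding simple_lie_algebra_def by (blast intro: lie_alg_if_lie_algebra)
  interpret simple_z2_graded_lie_alg s br g0 g1
    using assms unfolding simple_lie_algebra_def Z2_grading_def
    by unfold_locales blast+
  show ?thesis by (rule maximal_lie_triple_subsystem_g1)
qed

theorem mainTheorem4:
  shows "(\<forall>(s :: real \<Rightarrow> 'v::ab_group_add \<Rightarrow> 'v) br g0 g1.
            simple_lie_algebra s br \<and> finite_dim s \<and> Z2_grading s br g0 g1 \<and> g1 \<noteq> {0}
            \<longrightarrow> maximal_lie_triple_subsystem s br g1)
       \<and> (\<forall>(s :: complex \<Rightarrow> 'w::ab_group_add \<Rightarrow> 'w) br g0 g1.
            simple_lie_algebra s br \<and> finite_dim s \<and> Z2_grading s br g0 g1 \<and> g1 \<noteq> {0}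
            \<longrightarrow> maximal_lie_triple_subsystem s br g1)"
  by (intro conjI allI impI) (auto intro: maximal_lie_triple_subsystem_odd_part)

end
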